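(* Let $A_2$ be the hexagonal lattice in $\mathbb{R}^2\cong\mathbb{C}$, i.e. the lattice $\mathbb{Z}+\mathbb{Z}\frac{1+\sqrt{-3}}{2}$ (the ring of integers of $\mathbb{Q}(\sqrt{-3})$). For every $m>0$ such that the shell $(A_2)_m=\{x\in A_2 : (x,x)=m\}$ is nonempty, the shell $(A_2)_m$ is not a spherical $6$-design.
   Context: $(x,y)$ denotes the standard Euclidean inner product on $\mathbb{R}^2\cong\mathbb{C}$, so $(x,x)=|x|^2$. A finite nonempty set $X\subset S^{n-1}$ is a spherical $t$-design if $\frac{1}{|X|}\sum_{x\in X}f(x)=\frac{1}{|S^{n-1}|}\int_{S^{n-1}}f\,d\sigma$ for all polynomials $f$ of degree at most $t$; a finite nonempty subset $X$ of the sphere of radius $r$ is a spherical $t$-design if $\frac{1}{r}X$ is one. (For $n=2$, a finite set $\{\xi_1,\dots,\xi_N\}$ on the unit circle in $\mathbb{C}$ is a spherical $t$-design iff $\sum_i\xi_i^k=0$ for $k=1,\dots,t$.) *)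

theory Defs
  imports "HOL-Analysis.Analysis"
begin

definition poly2_deg_le :: "nat \<Rightarrow> (real \<Rightarrow> real \<Rightarrow> real) \<Rightarrow> bool" where
  "poly2_deg_le t f \<longleftrightarrow>
     (\<exists>c :: nat \<Rightarrow> nat \<Rightarrow> real. \<forall>x y.
        f x y = (\<Sum>(i, j) \<in> {(i, j). i + j \<le> t}. c i j * x ^ i * y ^ j))"

definition circle_design :: "nat \<Rightarrow> complex set \<Rightarrow> bool" where
  "circle_design t X \<longleftrightarrow>
     finite X \<and> X \<noteq> {} \<and> X \<subseteq> sphere 0 1 \<and>
     (\<forall>f. poly2_deg_le t f \<longrightarrow>
        (\<Sum>x\<in>X. f (Re x) (Im x)) / real (card X)
          = integral {0..2*pi} (\<lambda>\<theta>. f (cos \<theta>) (sin \<theta>)) / (2*pi))"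

definition circle_design_r :: "real \<Rightarrow> nat \<Rightarrow> complex set \<Rightarrow> bool" where
  "circle_design_r r t X \<longleftrightarrow>
     r > 0 \<and> X \<subseteq> sphere 0 r \<and> circle_design t ((\<lambda>x. x / complex_of_real r) ` X)"

definition A2 :: "complex set" where
  "A2 = {of_int a + of_int b * ((1 + \<i> * complex_of_real (sqrt 3)) / 2) | a b :: int. True}"

definition A2_shell :: "real \<Rightarrow> complex set" where
  "A2_shell m = {x \<in> A2. (cmod x)\<^sup>2 = m}"

end

theory Submission
  imports Defs "HOL-Computational_Algebra.Primes"
begin

text \<open>A 6-design on a circle kills \<open>\<Sum> x\<^sup>6\<close>, so it suffices to show that this power sum over a
  nonempty shell of \<open>A\<^sub>2 = \<int>[\<omega>]\<close> never vanishes. Since \<open>\<int>[\<omega>]\<close> is Euclidean and its units are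
  the sixth roots of unity, the sum is multiplicative in the norm: if \<open>3\<close> or an inert prime
  divides the norm, it divides every element of the shell (as \<open>1 + \<omega>\<close>, resp. itself) and the
  sum is a nonzero sixth power times a sum over a smaller shell; if a split prime
  \<open>p = \<pi> cnj \<pi>\<close> divides the norm exactly \<open>e\<close> times, the sum gets multiplied by
  \<open>(a^(e+1) - b^(e+1)) / (a - b)\<close> with \<open>a = cnj \<pi>^6\<close> and \<open>b = \<pi>^6\<close>, which is nonzero because
  \<open>\<pi>\<close> does not divide \<open>cnj \<pi>\<close>. On the norm-1 shell every term is 1.\<close>

subsection \<open>Power sums over circle designs\<close>

lemma poly2_deg_leI:
  assumes D: "D \<subseteq> {(i, j). i + j \<le> t}"
    and f: "\<And>x y. f x y = (\<Sum>(i, j)\<in>D. c i j * x ^ i * y ^ j)"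
  shows "poly2_deg_le t f"
proof -
  define c' where "c' i j = (if (i, j) \<in> D then c i j else 0)" for i j
  have fin: "finite {(i, j). i + j \<le> t}"
    by (rule finite_subset[of _ "{0..t} \<times> {0..t}"]) auto
  have "f x y = (\<Sum>(i, j)\<in>{(i, j). i + j \<le> t}. c' i j * x ^ i * y ^ j)" for x y
  proof -
    have "(\<Sum>(i, j)\<in>{(i, j). i + j \<le> t}. c' i j * x ^ i * y ^ j) = (\<Sum>(i, j)\<in>D. c' i j * x ^ i * y ^ j)"
      by (rule sum.mono_neutral_right[OF fin D]) (auto simp: c'_def)
    also have "\<dots> = (\<Sum>(i, j)\<in>D. c i j * x ^ i * y ^ j)"
      by (rule sum.cong) (auto simp: c'_def)
    finally show ?thesis using f by simp
  qed
  thus ?thesis unfolding poly2_deg_le_def by blast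
qed

lemma poly2_deg_le_Re_mult_power:
  assumes "k \<le> t"
  shows "poly2_deg_le t (\<lambda>x y. Re (d * Complex x y ^ k))"
proof (rule poly2_deg_leI)
  show "(\<lambda>j. (k - j, j)) ` {..k} \<subseteq> {(i, j). i + j \<le> t}" using assms by auto
  fix x y :: real
  have "d * Complex x y ^ k = d * (\<i> * of_real y + of_real x) ^ k"
    by (simp add: Complex_eq add.commute)
  also have "\<dots> = (\<Sum>j\<le>k. (d * of_nat (k choose j) * \<i> ^ j) * of_real (x ^ (k - j) * y ^ j))"
    unfolding binomial_ring by (simp add: power_mult_distrib sum_distrib_left algebra_simps)
  finally have "Re (d * Complex x y ^ k)
      = (\<Sum>j\<le>k. Re (d * of_nat (k choose j) * \<i> ^ j) * x ^ (k - j) * y ^ j)"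
    by (simp add: Re_sum algebra_simps)
  also have "\<dots> = (\<Sum>(i, j)\<in>(\<lambda>j. (k - j, j)) ` {..k}. Re (d * of_nat (k choose j) * \<i> ^ j) * x ^ i * y ^ j)"
    by (subst sum.reindex) (auto simp: inj_on_def)
  finally show "Re (d * Complex x y ^ k) = \<dots>" .
qed

lemma integral_Re_mult_cis_multiple:
  assumes "k \<noteq> 0"
  shows "integral {0..2*pi} (\<lambda>\<theta>. Re (d * cis (real k * \<theta>))) = 0"
proof -
  define F where "F \<theta> = (Re d * sin (real k * \<theta>) + Im d * cos (real k * \<theta>)) / real k" for \<theta>
  have "((\<lambda>\<theta>. Re (d * cis (real k * \<theta>))) has_integral F (2*pi) - F 0) {0..2*pi}"
  proof (rule fundamental_theorem_of_calculus)
    fix \<theta> assume "\<theta> \<in> {0..2*pi}"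
    have "(F has_real_derivative Re (d * cis (real k * \<theta>))) (at \<theta> within {0..2*pi})"
      unfolding F_def using assms
      by (auto intro!: derivative_eq_intros simp: field_simps)
    thus "(F has_vector_derivative Re (d * cis (real k * \<theta>))) (at \<theta> within {0..2*pi})"
      by (simp add: has_real_derivative_iff_has_vector_derivative)
  qed simp
  moreover have "F (2*pi) = F 0"
  proof -
    have "real k * (2 * pi) = real (2 * k) * pi" "real k * (2 * pi) = 2 * real k * pi" by simp_all
    thus ?thesis by (simp only: F_def) (metis sin_npi cos_2npi mult_zero_right sin_zero cos_zero)
  qed
  ultimately show ?thesis by (simp add: integral_unique)
qed

lemma circle_design_power_sum:
  assumes "circle_design t X" "0 < k" "k \<le> t"
  shows "(\<Sum>x\<in>X. x ^ k) = 0"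
proof -
  have X: "finite X" "X \<noteq> {}" using assms(1) by (auto simp: circle_design_def)
  have cis_power: "Complex (cos \<theta>) (sin \<theta>) ^ k = cis (real k * \<theta>)" for \<theta>
    using Complex.DeMoivre[of \<theta> k] by (simp add: cis.code)
  have Re_sum_zero: "(\<Sum>x\<in>X. Re (d * x ^ k)) = 0" for d
  proof -
    have "(\<Sum>x\<in>X. Re (d * Complex (Re x) (Im x) ^ k)) / real (card X)
        = integral {0..2*pi} (\<lambda>\<theta>. Re (d * Complex (cos \<theta>) (sin \<theta>) ^ k)) / (2*pi)"
      using assms(1) poly2_deg_le_Re_mult_power[OF assms(3)] unfolding circle_design_def by blast
    also have "\<dots> = integral {0..2*pi} (\<lambda>\<theta>. Re (d * cis (real k * \<theta>))) / (2*pi)"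
      by (simp add: cis_power)
    finally show ?thesis
      using integral_Re_mult_cis_multiple[of k d] assms(2) X by simp
  qed
  have "Re (\<Sum>x\<in>X. x ^ k) = 0" using Re_sum_zero[of 1] by (simp add: Re_sum)
  moreover have "Im (\<Sum>x\<in>X. x ^ k) = 0" using Re_sum_zero[of "-\<i>"] by (simp add: Im_sum)
  ultimately show ?thesis by (simp add: complex_eq_iff)
qed

subsection \<open>Eisenstein integers\<close>

definition \<omega> :: complex where "\<omega> = (1 + \<i> * complex_of_real (sqrt 3)) / 2"

definition eis :: "int \<Rightarrow> int \<Rightarrow> complex" where "eis a b = of_int a + of_int b * \<omega>"

lemma Re_omega [simp]: "Re \<omega> = 1/2" and Im_omega [simp]: "Im \<omega> = sqrt 3 / 2"
  by (simp_all add: \<omega>_def)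

lemma Re_eis [simp]: "Re (eis a b) = a + b/2" and Im_eis [simp]: "Im (eis a b) = b * sqrt 3 / 2"
  by (simp_all add: eis_def)

lemma omega_squared: "\<omega> * \<omega> = \<omega> - 1"
  by (simp add: complex_eq_iff \<omega>_def field_simps)

lemma in_A2: "x \<in> A2 \<longleftrightarrow> (\<exists>a b. x = eis a b)"
  by (auto simp: A2_def eis_def \<omega>_def)

lemma eis_in_A2 [simp]: "eis a b \<in> A2"
  by (auto simp: in_A2)

lemma eis_eq_iff [simp]: "eis a b = eis c d \<longleftrightarrow> a = c \<and> b = d"
proof
  assume eq: "eis a b = eis c d"
  hence "Im (eis a b) = Im (eis c d)" by simp
  hence "b = d" by simp
  with eq show "a = c \<and> b = d" by (metis Re_eis add_right_cancel of_int_eq_iff)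
qed simp

lemma eis_mult: "eis a b * eis c d = eis (a*c - b*d) (a*d + b*c + b*d)"
proof -
  have "eis a b * eis c d = of_int (a*c) + of_int (a*d + b*c) * \<omega> + of_int (b*d) * (\<omega> * \<omega>)"
    by (simp add: eis_def algebra_simps)
  also have "\<dots> = eis (a*c - b*d) (a*d + b*c + b*d)"
    by (simp add: omega_squared eis_def algebra_simps)
  finally show ?thesis .
qed

lemma eis_diff: "eis a b - eis c d = eis (a - c) (b - d)"
  by (simp add: eis_def algebra_simps)

lemma eis_of_int: "eis a 0 = of_int a"
  by (simp add: eis_def)

lemma eis_1: "eis 1 0 = 1"
  by (simp add: eis_def)

lemma cnj_eis: "cnj (eis a b) = eis (a + b) (- b)"
  by (simp add: complex_eq_iff)

lemma cmod_squared_omega_coords: "(cmod (of_real s + of_real t * \<omega>))\<^sup>2 = s\<^sup>2 + s*t + t\<^sup>2"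
  unfolding cmod_power2 by (simp add: power2_eq_square field_simps)

lemma cmod_squared_eis: "(cmod (eis a b))\<^sup>2 = of_int (a\<^sup>2 + a*b + b\<^sup>2)"
  using cmod_squared_omega_coords[of "of_int a" "of_int b"] by (simp add: eis_def)

lemma A2_mult: "x \<in> A2 \<Longrightarrow> y \<in> A2 \<Longrightarrow> x * y \<in> A2"
  by (auto simp: in_A2 eis_mult)

lemma A2_cnj: "x \<in> A2 \<Longrightarrow> cnj x \<in> A2"
  by (auto simp: in_A2 cnj_eis)

lemma A2_of_int: "of_int a \<in> A2"
  by (metis eis_in_A2 eis_of_int)

lemma A2_of_nat: "of_nat a \<in> A2"
  using A2_of_int[of "int a"] by simp

lemma A2_power: "x \<in> A2 \<Longrightarrow> x ^ n \<in> A2"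
  by (induction n) (use A2_of_int[of 1] in \<open>auto intro: A2_mult\<close>)

lemma norm_form_eq: "4 * (a\<^sup>2 + a*b + b\<^sup>2) = (2*a + b)\<^sup>2 + 3 * b\<^sup>2" for a b :: int
  by algebra

lemma norm_form_nonneg: "0 \<le> a\<^sup>2 + a*b + (b\<^sup>2 :: int)"
  using norm_form_eq[of a b] by (smt (verit) zero_le_power2)

lemma abs_le_square_int: "\<bar>b :: int\<bar> \<le> b\<^sup>2"
proof (cases "b = 0")
  case False
  hence "\<bar>b\<bar> * 1 \<le> \<bar>b\<bar> * \<bar>b\<bar>" by (intro mult_left_mono) auto
  thus ?thesis by (simp add: power2_eq_square abs_mult[symmetric])
qed simp

lemma norm_form_bound:
  assumes "a\<^sup>2 + a*b + b\<^sup>2 = (N :: int)"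
  shows "\<bar>a\<bar> \<le> 4 * N" "\<bar>b\<bar> \<le> 4 * N"
proof -
  have "4 * N = (2*a + b)\<^sup>2 + 3 * b\<^sup>2" using norm_form_eq[of a b] assms by simp
  hence "\<bar>b\<bar> \<le> 4 * N" "\<bar>2*a + b\<bar> \<le> 4 * N"
    using abs_le_square_int[of b] abs_le_square_int[of "2*a + b"]
      zero_le_power2[of b] zero_le_power2[of "2*a + b"] by linarith+
  thus "\<bar>a\<bar> \<le> 4 * N" "\<bar>b\<bar> \<le> 4 * N" by linarith+
qed

lemma A2_cmod_squared_nat:
  assumes "x \<in> A2" shows "\<exists>k::nat. (cmod x)\<^sup>2 = real k"
proof -
  obtain a b where "x = eis a b" using assms by (auto simp: in_A2)
  hence "(cmod x)\<^sup>2 = real (nat (a\<^sup>2 + a*b + b\<^sup>2))"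
    using cmod_squared_eis[of a b] norm_form_nonneg[of a b] by simp
  thus ?thesis by blast
qed

subsection \<open>Divisibility and division with remainder\<close>

definition A2_dvd :: "complex \<Rightarrow> complex \<Rightarrow> bool" where
  "A2_dvd y x \<longleftrightarrow> (\<exists>z\<in>A2. x = y * z)"

lemma A2_dvd_mult_right: "y \<in> A2 \<Longrightarrow> A2_dvd c (c * y)"
  by (auto simp: A2_dvd_def)

lemma A2_dvd_of_int_eis_iff: "A2_dvd (of_int p) (eis a b) \<longleftrightarrow> p dvd a \<and> p dvd b"
proof
  assume "A2_dvd (of_int p) (eis a b)"
  then obtain z where "z \<in> A2" "eis a b = eis p 0 * z" by (auto simp: A2_dvd_def eis_of_int)
  then obtain e f where "eis a b = eis p 0 * eis e f" by (auto simp: in_A2)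
  thus "p dvd a \<and> p dvd b" by (simp add: eis_mult)
next
  assume "p dvd a \<and> p dvd b"
  then obtain a' b' where "a = p * a'" "b = p * b'" by (auto elim!: dvdE)
  hence "eis a b = of_int p * eis a' b'" by (simp add: eis_def algebra_simps)
  thus "A2_dvd (of_int p) (eis a b)" by (auto simp: A2_dvd_def)
qed

lemma real_norm_form_less_1:
  fixes s t :: real
  assumes "\<bar>s\<bar> \<le> 1/2" "\<bar>t\<bar> \<le> 1/2"
  shows "s\<^sup>2 + s*t + t\<^sup>2 < 1"
proof -
  have "\<bar>s\<bar>\<^sup>2 \<le> (1/2)\<^sup>2" "\<bar>t\<bar>\<^sup>2 \<le> (1/2)\<^sup>2"
    by (rule power_mono[OF assms(1)] power_mono[OF assms(2)], simp)+
  moreover have "\<bar>s\<bar> * \<bar>t\<bar> \<le> (1/2) * (1/2)" by (rule mult_mono[OF assms]) simp_all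
  moreover have "s*t \<le> \<bar>s\<bar> * \<bar>t\<bar>" by (simp add: abs_mult[symmetric])
  ultimately show ?thesis by (simp add: power2_abs power_divide)
qed

text \<open>Divide in \<open>\<complex>\<close> and round both \<open>\<omega>\<close>-coordinates of the quotient.\<close>
lemma A2_division:
  assumes "\<alpha> \<in> A2" "\<beta> \<in> A2" "\<beta> \<noteq> 0"
  shows "\<exists>q\<in>A2. cmod (\<alpha> - q * \<beta>) < cmod \<beta>"
proof -
  have "\<alpha> * cnj \<beta> \<in> A2" using assms by (simp add: A2_mult A2_cnj)
  then obtain u v where uv: "\<alpha> * cnj \<beta> = eis u v" by (auto simp: in_A2)
  define r where "r = (cmod \<beta>)\<^sup>2"
  have r: "r > 0" "\<beta> * cnj \<beta> = of_real r"
    using assms(3) complex_norm_square[of \<beta>] by (simp_all add: r_def)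
  have quotient: "\<alpha> / \<beta> = of_real (u/r) + of_real (v/r) * \<omega>"
  proof -
    have "\<alpha> / \<beta> = \<alpha> * cnj \<beta> / (\<beta> * cnj \<beta>)" using assms(3) by (simp add: field_simps)
    also have "\<dots> = of_real (u/r) + of_real (v/r) * \<omega>"
      using r by (simp add: uv eis_def field_simps)
    finally show ?thesis .
  qed
  define q where "q = eis (round (u/r)) (round (v/r))"
  define s where "s = u/r - of_int (round (u/r))"
  define t where "t = v/r - of_int (round (v/r))"
  have "\<alpha>/\<beta> - q = of_real s + of_real t * \<omega>"
    by (simp add: quotient q_def s_def t_def eis_def algebra_simps)
  hence "(cmod (\<alpha>/\<beta> - q))\<^sup>2 < 1"
    using cmod_squared_omega_coords[of s t] real_norm_form_less_1[of s t]
      of_int_round_abs_le[of "u/r"] of_int_round_abs_le[of "v/r"]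
    by (simp add: s_def t_def abs_minus_commute)
  hence "cmod (\<alpha>/\<beta> - q) < 1"
    by (metis abs_norm_cancel abs_square_less_1)
  moreover have "\<alpha> - q * \<beta> = \<beta> * (\<alpha>/\<beta> - q)"
    using assms(3) by (simp add: field_simps)
  hence "cmod (\<alpha> - q * \<beta>) = cmod \<beta> * cmod (\<alpha>/\<beta> - q)"
    by (simp add: norm_mult)
  ultimately show ?thesis using assms(3) q_def by (auto intro!: bexI[of _ q])
qed

subsection \<open>Sixth power sums over shells\<close>

definition shell :: "nat \<Rightarrow> complex set" where "shell n = A2_shell (real n)"

definition shell_sum6 :: "nat \<Rightarrow> complex" where "shell_sum6 n = (\<Sum>x\<in>shell n. x ^ 6)"

lemma in_shell: "x \<in> shell n \<longleftrightarrow> x \<in> A2 \<and> (cmod x)\<^sup>2 = real n"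
  by (simp add: shell_def A2_shell_def)

lemma eis_in_shell_iff: "eis a b \<in> shell n \<longleftrightarrow> a\<^sup>2 + a*b + b\<^sup>2 = int n"
proof -
  have "real_of_int (a\<^sup>2 + a*b + b\<^sup>2) = real_of_int (int n) \<longleftrightarrow> a\<^sup>2 + a*b + b\<^sup>2 = int n"
    by (rule of_int_eq_iff)
  thus ?thesis by (simp add: in_shell cmod_squared_eis)
qed

lemma finite_shell: "finite (shell n)"
proof (rule finite_subset)
  let ?B = "{-4 * int n..4 * int n}"
  show "shell n \<subseteq> case_prod eis ` (?B \<times> ?B)"
  proof
    fix x assume x: "x \<in> shell n"
    then obtain a b where ab: "x = eis a b" by (auto simp: in_shell in_A2)
    hence "a\<^sup>2 + a*b + b\<^sup>2 = int n" using x by (simp add: eis_in_shell_iff)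
    hence "\<bar>a\<bar> \<le> 4 * int n" "\<bar>b\<bar> \<le> 4 * int n" by (rule norm_form_bound)+
    thus "x \<in> case_prod eis ` (?B \<times> ?B)" using ab by (auto intro!: image_eqI[of _ _ "(a, b)"])
  qed
qed simp

lemma mult_in_shell:
  assumes "c \<in> A2" "(cmod c)\<^sup>2 = real k" "y \<in> shell j"
  shows "c * y \<in> shell (k * j)"
  using assms by (simp add: in_shell A2_mult norm_mult power_mult_distrib)

lemma mult_in_shellD:
  assumes "c * z \<in> shell (k * j)" "z \<in> A2" "(cmod c)\<^sup>2 = real k" "k > 0"
  shows "z \<in> shell j"
  using assms by (simp add: in_shell norm_mult power_mult_distrib)

lemma sum_power_mult_image:
  fixes c :: "'a :: field"
  assumes "c \<noteq> 0"
  shows "(\<Sum>x\<in>(\<lambda>y. c * y) ` A. x ^ k) = c ^ k * (\<Sum>y\<in>A. y ^ k)"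
proof -
  have "inj_on (\<lambda>y. c * y) A" using assms by (auto simp: inj_on_def)
  thus ?thesis by (simp add: sum.reindex sum_distrib_left power_mult_distrib)
qed

lemma shell_eq_mult_image:
  assumes "c \<in> A2" "(cmod c)\<^sup>2 = real k" "k > 0" "\<forall>x\<in>shell (k * j). A2_dvd c x"
  shows "shell (k * j) = (\<lambda>y. c * y) ` shell j"
proof
  show "shell (k * j) \<subseteq> (\<lambda>y. c * y) ` shell j"
  proof
    fix x assume "x \<in> shell (k * j)"
    with assms obtain z where "z \<in> A2" "x = c * z" "c * z \<in> shell (k * j)" by (auto simp: A2_dvd_def)
    with assms show "x \<in> (\<lambda>y. c * y) ` shell j" by (auto dest: mult_in_shellD)
  qed
qed (use assms mult_in_shell in auto)

lemma shell_sum6_eq_mult: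
  assumes "c \<in> A2" "(cmod c)\<^sup>2 = real k" "k > 0" "\<forall>x\<in>shell (k * j). A2_dvd c x"
  shows "shell_sum6 (k * j) = c ^ 6 * shell_sum6 j" and "shell (k * j) \<noteq> {} \<Longrightarrow> shell j \<noteq> {}"
proof -
  have "c \<noteq> 0" using assms by auto
  thus "shell_sum6 (k * j) = c ^ 6 * shell_sum6 j"
    by (simp add: shell_sum6_def shell_eq_mult_image[OF assms] sum_power_mult_image)
  show "shell (k * j) \<noteq> {} \<Longrightarrow> shell j \<noteq> {}" using shell_eq_mult_image[OF assms] by auto
qed

lemma shell_1_power6: "x \<in> shell 1 \<Longrightarrow> x ^ 6 = 1"
proof -
  assume x1: "x \<in> shell 1"
  then obtain a b where x: "x = eis a b" by (auto simp: in_shell in_A2)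
  hence N: "a\<^sup>2 + a*b + b\<^sup>2 = 1" using x1 by (simp add: eis_in_shell_iff)
  have "a \<in> {-4..4}" "b \<in> {-4..4}" using norm_form_bound[OF N] by auto
  hence "a \<in> {-4,-3,-2,-1,0,1,2,3,4}" "b \<in> {-4,-3,-2,-1,0,1,2,3,4}" by (auto simp: atLeastAtMost_iff)
  moreover have "x ^ 6 = x * (x * (x * (x * (x * x))))" by (simp add: eval_nat_numeral)
  ultimately show "x ^ 6 = 1" using N unfolding x by (auto simp: eis_mult eis_1[symmetric])
qed

lemma shell_sum6_1: "shell_sum6 1 = of_nat (card (shell 1))"
  by (simp add: shell_sum6_def shell_1_power6)

text \<open>\<open>1 + \<omega>\<close> has norm 3, and \<open>3 \<bar> a\<^sup>2 + a b + b\<^sup>2 = (a - b)\<^sup>2 + 3 a b\<close> forces \<open>3 \<bar> a - b\<close>.\<close>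
lemma shell_3_dvd:
  assumes "x \<in> shell (3 * j)"
  shows "A2_dvd (eis 1 1) x"
proof -
  obtain a b where ab: "x = eis a b" using assms by (auto simp: in_shell in_A2)
  hence "a\<^sup>2 + a*b + b\<^sup>2 = 3 * int j" using assms by (simp add: eis_in_shell_iff)
  hence "3 dvd (a - b)\<^sup>2 + 3 * (a*b)" by (simp add: power2_eq_square algebra_simps)
  hence "3 dvd (a - b)\<^sup>2" by (simp add: dvd_add_left_iff)
  hence "3 dvd a - b" using prime_dvd_power[of "3::int"] by simp
  then obtain k where "a - b = 3 * k" by blast
  hence "x = eis 1 1 * eis (a - k) (- k)" by (simp add: ab eis_mult algebra_simps)
  thus ?thesis by (auto simp: A2_dvd_def)
qed

lemma shell_sum6_3: "shell_sum6 (3 * j) = eis 1 1 ^ 6 * shell_sum6 j"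
  and shell_3_nonempty: "shell (3 * j) \<noteq> {} \<Longrightarrow> shell j \<noteq> {}"
  using shell_sum6_eq_mult[of "eis 1 1" 3 j] cmod_squared_eis[of 1 1] shell_3_dvd by auto

lemma A2_dvd_of_nat_shell:
  assumes "A2_dvd (of_nat p) x" "x \<in> shell n"
  shows "p\<^sup>2 dvd n"
proof -
  obtain z where z: "z \<in> A2" "x = of_nat p * z" using assms by (auto simp: A2_dvd_def)
  obtain k where k: "(cmod z)\<^sup>2 = real k" using A2_cmod_squared_nat[OF z(1)] by blast
  have "real n = real (p\<^sup>2 * k)" using assms(2) z k by (simp add: in_shell norm_mult power_mult_distrib)
  thus ?thesis by (simp only: of_nat_eq_iff) simp
qed

lemma shell_sum6_of_nat_dvd:
  assumes "p > 0" "\<forall>x\<in>shell (p\<^sup>2 * j). A2_dvd (of_nat p) x"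
  shows "shell_sum6 (p\<^sup>2 * j) = of_nat p ^ 6 * shell_sum6 j"
    and "shell (p\<^sup>2 * j) \<noteq> {} \<Longrightarrow> shell j \<noteq> {}"
  using shell_sum6_eq_mult[of "of_nat p" "p\<^sup>2" j] assms A2_of_nat by auto

subsection \<open>Split primes\<close>

text \<open>Here \<open>p \<nmid> b\<close>, and \<open>r = -a/b\<close> modulo \<open>p\<close> is a root of \<open>X\<^sup>2 - X + 1\<close>, the minimal polynomial
  of \<open>\<omega>\<close>, since \<open>b\<^sup>2 (r\<^sup>2 - r + 1) \<equiv> a\<^sup>2 + a b + b\<^sup>2\<close>.\<close>
lemma prime_dvd_norm_form_imp_root:
  fixes p a b :: int
  assumes p: "prime p" and dvd: "p dvd a\<^sup>2 + a*b + b\<^sup>2" and not_both: "\<not> (p dvd a \<and> p dvd b)"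
  shows "\<exists>r. p dvd r\<^sup>2 - r + 1"
proof -
  have "\<not> p dvd b"
  proof
    assume pb: "p dvd b"
    have "p dvd (a\<^sup>2 + a*b + b\<^sup>2) - (a*b + b*b)" using pb by (intro dvd_diff[OF dvd] dvd_add) auto
    hence "p dvd a\<^sup>2" by (simp add: power2_eq_square)
    hence "p dvd a" using p prime_dvd_power by blast
    thus False using not_both pb by blast
  qed
  hence "coprime p b" using p by (simp add: prime_imp_coprime)
  then obtain u v where uv: "u * b + v * p = 1"
    using bezout_int[of b p] by (metis coprime_iff_gcd_eq_1 gcd.commute)
  define r where "r = - a * u"
  have "b * r = - a * (u * b)" by (simp add: r_def algebra_simps)
  also have "\<dots> = p * (a * v) - a"
    using arg_cong[OF uv, of "\<lambda>t. a * t"] by (simp add: algebra_simps)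
  finally have br: "b * r = p * (a * v) - a" .
  have "b\<^sup>2 * (r\<^sup>2 - r + 1) = (b * r)\<^sup>2 - b * (b * r) + b\<^sup>2" by (simp add: power2_eq_square algebra_simps)
  also have "\<dots> = (a\<^sup>2 + a*b + b\<^sup>2) + p * (p * (a * v)\<^sup>2 - 2 * a * (a * v) - b * (a * v))"
    unfolding br by (simp add: power2_eq_square algebra_simps)
  finally have "p dvd b\<^sup>2 * (r\<^sup>2 - r + 1)" using dvd by (metis dvd_add dvd_triv_left)
  moreover have "\<not> p dvd b\<^sup>2" using \<open>\<not> p dvd b\<close> p prime_dvd_power by blast
  ultimately show ?thesis using p by (auto simp: prime_dvd_mult_iff)
qed

text \<open>\<open>r\<close> is a root of \<open>X\<^sup>2 - X + 1\<close> modulo \<open>p\<close>, so \<open>u + v \<omega> \<mapsto> u + v r mod p\<close> is a ring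
  homomorphism onto \<open>\<int>/p\<close>; \<open>in_ker\<close> is membership in its kernel, a prime ideal of norm \<open>p\<close>.\<close>
locale split_prime =
  fixes p r :: int
  assumes prime: "prime p" and not_3: "p \<noteq> 3" and root: "p dvd r\<^sup>2 - r + 1"
begin

definition in_ker :: "complex \<Rightarrow> bool" where
  "in_ker z \<longleftrightarrow> (\<exists>u v. z = eis u v \<and> p dvd u + v * r)"

lemma in_ker_eis [simp]: "in_ker (eis u v) \<longleftrightarrow> p dvd u + v * r"
  by (auto simp: in_ker_def)

lemma in_ker_A2: "in_ker z \<Longrightarrow> z \<in> A2"
  by (auto simp: in_ker_def)

lemma p_gt_1: "p > 1"
  using prime prime_gt_1_int by blast

lemma in_ker_mult:
  assumes "x \<in> A2" "y \<in> A2"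
  shows "in_ker (x * y) \<longleftrightarrow> in_ker x \<or> in_ker y"
proof -
  obtain a b c d where x: "x = eis a b" and y: "y = eis c d" using assms by (auto simp: in_A2)
  have "(a*c - b*d) + (a*d + b*c + b*d) * r = (a + b * r) * (c + d * r) - b * d * (r\<^sup>2 - r + 1)"
    by (simp add: algebra_simps power2_eq_square)
  hence "p dvd (a*c - b*d) + (a*d + b*c + b*d) * r \<longleftrightarrow> p dvd (a + b * r) * (c + d * r)"
    using root by (metis dvd_diff dvd_mult diff_add_cancel dvd_add)
  thus ?thesis using prime by (simp add: x y eis_mult prime_dvd_mult_iff)
qed

lemma in_ker_diff:
  assumes "in_ker x" "in_ker y"
  shows "in_ker (x - y)"
proof -
  obtain a b c d where x: "x = eis a b" "p dvd a + b * r" and y: "y = eis c d" "p dvd c + d * r"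
    using assms by (auto simp: in_ker_def)
  have "(a - c) + (b - d) * r = (a + b * r) - (c + d * r)" by (simp add: algebra_simps)
  hence "p dvd (a - c) + (b - d) * r" using dvd_diff[OF x(2) y(2)] by metis
  thus ?thesis by (simp add: x y eis_diff)
qed

lemma in_ker_of_int_p: "in_ker (of_int p)"
  by (metis eis_of_int in_ker_eis dvd_refl mult_zero_left add_0_right)

lemma not_in_ker_1: "\<not> in_ker 1"
proof
  assume "in_ker 1"
  hence "p dvd 1" by (metis eis_of_int of_int_1 in_ker_eis mult_zero_left add_0_right)
  thus False using p_gt_1 by simp
qed

text \<open>An element of least positive norm in the kernel generates it, by division with remainder.\<close>
lemma ker_principal: "\<exists>\<pi>. in_ker \<pi> \<and> \<pi> \<noteq> 0 \<and> (\<forall>z\<in>A2. A2_dvd \<pi> z \<longleftrightarrow> in_ker z)"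
proof -
  define P where "P k \<longleftrightarrow> (\<exists>z. in_ker z \<and> z \<noteq> 0 \<and> (cmod z)\<^sup>2 = real k)" for k
  have "P (nat (p\<^sup>2))"
    unfolding P_def using in_ker_of_int_p p_gt_1
    by (intro exI[of _ "of_int p"]) (simp add: norm_power[symmetric])
  hence "P (LEAST k. P k)" by (rule LeastI)
  then obtain \<pi> where \<pi>: "in_ker \<pi>" "\<pi> \<noteq> 0" "(cmod \<pi>)\<^sup>2 = real (LEAST k. P k)" by (auto simp: P_def)
  have "A2_dvd \<pi> z" if z: "in_ker z" for z
  proof -
    obtain q where q: "q \<in> A2" "cmod (z - q * \<pi>) < cmod \<pi>"
      using A2_division[OF in_ker_A2[OF z] in_ker_A2[OF \<pi>(1)] \<pi>(2)] by blast
    have rem: "in_ker (z - q * \<pi>)"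
      using in_ker_diff[OF z] in_ker_mult[OF q(1) in_ker_A2[OF \<pi>(1)]] \<pi>(1) by blast
    have "z - q * \<pi> = 0"
    proof (rule ccontr)
      assume "z - q * \<pi> \<noteq> 0"
      moreover obtain j where j: "(cmod (z - q * \<pi>))\<^sup>2 = real j"
        using A2_cmod_squared_nat[OF in_ker_A2[OF rem]] by blast
      ultimately have "(LEAST k. P k) \<le> j" using rem by (intro Least_le) (auto simp: P_def)
      moreover have "(cmod (z - q * \<pi>))\<^sup>2 < (cmod \<pi>)\<^sup>2" using q(2) by (simp add: power_strict_mono)
      ultimately show False using j \<pi>(3) by linarith
    qed
    thus ?thesis using q(1) by (auto simp: A2_dvd_def intro!: bexI[of _ q])
  qed
  moreover have "in_ker z" if "z \<in> A2" "A2_dvd \<pi> z" for z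
    using that \<pi>(1) in_ker_mult in_ker_A2 by (auto simp: A2_dvd_def)
  ultimately show ?thesis using \<pi> by blast
qed

lemma ker_generator_norm:
  assumes gen: "in_ker \<pi>" "\<forall>z\<in>A2. A2_dvd \<pi> z \<longleftrightarrow> in_ker z"
  shows "(cmod \<pi>)\<^sup>2 = of_int p"
proof -
  define q where "q = nat p"
  have p_eq: "p = int q" using p_gt_1 by (simp add: q_def)
  hence q: "prime q" using prime by simp
  have \<pi>: "\<pi> \<in> A2" using in_ker_A2 gen(1) .
  have "A2_dvd \<pi> (of_int p)" using gen(2) in_ker_of_int_p A2_of_int by blast
  then obtain w where w: "w \<in> A2" "of_nat q = \<pi> * w" by (auto simp: A2_dvd_def p_eq)
  obtain k where k: "(cmod \<pi>)\<^sup>2 = real k" using A2_cmod_squared_nat[OF \<pi>] by blast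
  obtain j where j: "(cmod w)\<^sup>2 = real j" using A2_cmod_squared_nat[OF w(1)] by blast
  have "real (k * j) = real (q\<^sup>2)"
    using arg_cong[OF w(2), of "\<lambda>z. (cmod z)\<^sup>2"] by (simp add: k j norm_mult power_mult_distrib)
  hence kj: "k * j = q\<^sup>2" by (simp only: of_nat_eq_iff)
  hence "k dvd q\<^sup>2" by (metis dvd_triv_left)
  then obtain i where i: "i \<le> 2" "k = q ^ i" using divides_primepow_nat[OF q] by blast
  have "i \<noteq> 0"
  proof
    assume "i = 0"
    hence "\<pi> * cnj \<pi> = 1" using i k complex_norm_square[of \<pi>] by simp
    moreover have "in_ker (\<pi> * cnj \<pi>)" using in_ker_mult[OF \<pi> A2_cnj[OF \<pi>]] gen(1) by blast
    ultimately show False using not_in_ker_1 by simp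
  qed
  moreover have "i \<noteq> 2"
  proof
    assume "i = 2"
    hence "j = 1" using kj i q prime_gt_0_nat by simp
    hence "w * cnj w = 1" using j complex_norm_square[of w] by simp
    moreover have "of_int p * cnj w = \<pi> * (w * cnj w)" using w(2) p_eq by (simp add: mult.assoc)
    ultimately have "\<pi> = of_int p * cnj w" by simp
    moreover have "A2_dvd \<pi> (eis (-r) 1)" using gen(2) by simp
    ultimately have "A2_dvd (of_int p) (eis (-r) 1)"
      using A2_mult[OF A2_cnj[OF w(1)]] by (auto simp: A2_dvd_def mult.assoc)
    thus False using p_gt_1 by (simp add: A2_dvd_of_int_eis_iff)
  qed
  ultimately show ?thesis using i k p_eq by (auto simp: le_Suc_eq numeral_2_eq_2)
qed

text \<open>Here \<open>p \<noteq> 3\<close> is used: \<open>\<pi>\<close> and \<open>cnj \<pi>\<close> both in the kernel would force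
  \<open>p \<bar> 2a + b\<close> and hence \<open>p \<bar> 3 b\<^sup>2\<close>.\<close>
lemma cnj_not_in_ker:
  assumes "in_ker \<pi>" "(cmod \<pi>)\<^sup>2 = of_int p"
  shows "\<not> in_ker (cnj \<pi>)"
proof
  assume cnj_in: "in_ker (cnj \<pi>)"
  obtain a b where ab: "\<pi> = eis a b" "p dvd a + b * r" using assms(1) by (auto simp: in_ker_def)
  have "p dvd (a + b) + (- b) * r" using cnj_in ab by (simp add: cnj_eis)
  hence "p dvd (a + b * r) + ((a + b) + (- b) * r)" using ab(2) by (rule dvd_add[rotated])
  hence "p dvd 2*a + b" by (simp add: algebra_simps)
  have N: "a\<^sup>2 + a*b + b\<^sup>2 = p"
    using assms(2) cmod_squared_eis[of a b] ab(1) by (simp only: of_int_eq_iff)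
  have "3 * b\<^sup>2 = 4 * (a\<^sup>2 + a*b + b\<^sup>2) - (2*a + b)\<^sup>2" by algebra
  also have "p dvd \<dots>" using N \<open>p dvd 2*a + b\<close> by (simp add: power2_eq_square)
  finally have "p dvd 3 \<or> p dvd b" using prime by (simp add: prime_dvd_mult_iff prime_dvd_power_iff)
  moreover have "\<not> p dvd 3"
  proof
    assume "p dvd 3"
    hence "p \<le> 3" "p \<noteq> 2" by (auto dest: zdvd_imp_le)
    thus False using p_gt_1 not_3 by linarith
  qed
  moreover have "\<not> p dvd b"
  proof
    assume pb: "p dvd b"
    hence "p dvd a" using ab(2) by (simp add: dvd_add_left_iff)
    hence "p * p dvd a\<^sup>2 + a*b + b\<^sup>2" using pb
      by (intro dvd_add) (auto simp: power2_eq_square intro: mult_dvd_mono)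
    hence "p * p dvd p * 1" using N by simp
    thus False using p_gt_1 by simp
  qed
  ultimately show False by blast
qed

end

locale prime_element =
  fixes \<pi> :: complex and p :: nat
  assumes pi_in_A2: "\<pi> \<in> A2" and norm_pi: "(cmod \<pi>)\<^sup>2 = real p" and prime: "prime p"
    and prime_dvd: "\<And>x y. x \<in> A2 \<Longrightarrow> y \<in> A2 \<Longrightarrow> A2_dvd \<pi> (x * y) \<Longrightarrow> A2_dvd \<pi> x \<or> A2_dvd \<pi> y"
    and not_dvd_cnj: "\<not> A2_dvd \<pi> (cnj \<pi>)"
begin

lemma p_pos: "p > 0"
  using prime prime_gt_0_nat by blast

lemma pi_nonzero: "\<pi> \<noteq> 0"
  using norm_pi p_pos by auto

lemma norm_cnj_pi: "(cmod (cnj \<pi>))\<^sup>2 = real p"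
  using norm_pi by simp

lemma A2_dvd_power: "x \<in> A2 \<Longrightarrow> A2_dvd \<pi> (x ^ n) \<Longrightarrow> A2_dvd \<pi> x"
proof (induction n)
  case 0
  then obtain z where "z \<in> A2" "1 = \<pi> * z" by (auto simp: A2_dvd_def)
  thus ?case using 0 by (auto simp: A2_dvd_def mult.assoc intro!: bexI[of _ "z * x"] A2_mult)
next
  case (Suc n)
  thus ?case using prime_dvd[of x "x ^ n"] A2_power by auto
qed

definition coprime_part :: "nat \<Rightarrow> complex set" where
  "coprime_part n = {x \<in> shell n. \<not> A2_dvd \<pi> x}"

lemma finite_coprime_part: "finite (coprime_part n)"
  using finite_shell[of n] by (simp add: coprime_part_def)

lemma shell_mult_p_split:
  "shell (p * j) = coprime_part (p * j) \<union> (\<lambda>y. \<pi> * y) ` shell j"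
  "coprime_part (p * j) \<inter> (\<lambda>y. \<pi> * y) ` shell j = {}"
proof -
  have "x \<in> (\<lambda>y. \<pi> * y) ` shell j" if "x \<in> shell (p * j)" "A2_dvd \<pi> x" for x
    using that p_pos norm_pi by (auto simp: A2_dvd_def intro: mult_in_shellD)
  thus "shell (p * j) = coprime_part (p * j) \<union> (\<lambda>y. \<pi> * y) ` shell j"
    using mult_in_shell[OF pi_in_A2 norm_pi] by (auto simp: coprime_part_def)
  show "coprime_part (p * j) \<inter> (\<lambda>y. \<pi> * y) ` shell j = {}"
    by (auto simp: coprime_part_def in_shell A2_dvd_mult_right)
qed

text \<open>If \<open>\<pi> \<nmid> x\<close> and \<open>\<pi> \<bar> x cnj x\<close> then \<open>\<pi> \<bar> cnj x\<close>, so \<open>cnj \<pi> \<bar> x\<close>.\<close>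
lemma coprime_part_mult_p: "coprime_part (p * j) = (\<lambda>y. cnj \<pi> * y) ` coprime_part j"
proof
  have cnj_pi: "cnj \<pi> \<in> A2" using A2_cnj[OF pi_in_A2] .
  show "coprime_part (p * j) \<subseteq> (\<lambda>y. cnj \<pi> * y) ` coprime_part j"
  proof
    fix x assume x: "x \<in> coprime_part (p * j)"
    hence xA: "x \<in> A2" and nd: "\<not> A2_dvd \<pi> x" and xn: "(cmod x)\<^sup>2 = real (p * j)"
      by (auto simp: coprime_part_def in_shell)
    have "x * cnj x = \<pi> * (cnj \<pi> * of_nat j)"
      using complex_norm_square[of x] complex_norm_square[of \<pi>] xn norm_pi by (simp add: mult.assoc)
    hence "A2_dvd \<pi> (x * cnj x)" using cnj_pi A2_of_nat A2_mult by (auto simp: A2_dvd_def)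
    hence "A2_dvd \<pi> (cnj x)" using prime_dvd[OF xA A2_cnj[OF xA]] nd by blast
    then obtain y where y: "y \<in> A2" "cnj x = \<pi> * y" by (auto simp: A2_dvd_def)
    hence xy: "x = cnj \<pi> * cnj y" by (metis complex_cnj_cnj complex_cnj_mult)
    have "\<not> A2_dvd \<pi> (cnj y)"
    proof
      assume "A2_dvd \<pi> (cnj y)"
      then obtain z where "z \<in> A2" "x = \<pi> * (cnj \<pi> * z)" using xy by (auto simp: A2_dvd_def mult.left_commute)
      thus False using nd cnj_pi A2_mult by (auto simp: A2_dvd_def)
    qed
    moreover have "cnj y \<in> shell j"
      using mult_in_shellD[of "cnj \<pi>" "cnj y" p j] x xy A2_cnj[OF y(1)] norm_cnj_pi p_pos
      by (simp add: coprime_part_def)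
    ultimately show "x \<in> (\<lambda>y. cnj \<pi> * y) ` coprime_part j" using xy by (auto simp: coprime_part_def)
  qed
  show "(\<lambda>y. cnj \<pi> * y) ` coprime_part j \<subseteq> coprime_part (p * j)"
    using prime_dvd[OF cnj_pi] not_dvd_cnj mult_in_shell[OF cnj_pi norm_cnj_pi]
    by (auto simp: coprime_part_def in_shell)
qed

lemma coprime_part_eq_shell:
  assumes "\<not> p dvd n"
  shows "coprime_part n = shell n"
proof -
  have "\<not> A2_dvd \<pi> x" if x: "x \<in> shell n" for x
  proof
    assume "A2_dvd \<pi> x"
    then obtain z where z: "z \<in> A2" "x = \<pi> * z" by (auto simp: A2_dvd_def)
    obtain j where "(cmod z)\<^sup>2 = real j" using A2_cmod_squared_nat[OF z(1)] by blast
    hence "real n = real (p * j)" using x z norm_pi by (simp add: in_shell norm_mult power_mult_distrib)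
    hence "n = p * j" by (simp only: of_nat_eq_iff)
    thus False using assms by simp
  qed
  thus ?thesis by (auto simp: coprime_part_def)
qed

lemma coprime_part_prime_power:
  assumes "\<not> p dvd m"
  shows "coprime_part (p ^ e * m) = (\<lambda>y. cnj \<pi> ^ e * y) ` shell m"
proof (induction e)
  case 0
  thus ?case using coprime_part_eq_shell[OF assms] by simp
next
  case (Suc e)
  have "coprime_part (p ^ Suc e * m) = (\<lambda>y. cnj \<pi> * y) ` coprime_part (p ^ e * m)"
    using coprime_part_mult_p[of "p ^ e * m"] by (simp add: mult.assoc)
  also have "\<dots> = (\<lambda>y. cnj \<pi> ^ Suc e * y) ` shell m"
    unfolding Suc.IH image_image by (simp add: mult.assoc)
  finally show ?case .
qed

lemma shell_sum6_mult_p: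
  "shell_sum6 (p * j) = (\<Sum>x\<in>coprime_part (p * j). x ^ 6) + \<pi> ^ 6 * shell_sum6 j"
  unfolding shell_sum6_def shell_mult_p_split(1)
  by (subst sum.union_disjoint)
     (use finite_coprime_part finite_shell shell_mult_p_split(2) pi_nonzero in
      \<open>auto simp: sum_power_mult_image\<close>)

lemma shell_sum6_prime_power:
  assumes "\<not> p dvd m"
  shows "(cnj \<pi> ^ 6 - \<pi> ^ 6) * shell_sum6 (p ^ e * m)
           = ((cnj \<pi> ^ 6) ^ Suc e - (\<pi> ^ 6) ^ Suc e) * shell_sum6 m"
proof (induction e)
  case (Suc e)
  define a b where "a = cnj \<pi> ^ 6" and "b = \<pi> ^ 6"
  have "(cnj \<pi> ^ Suc e) ^ 6 = a ^ Suc e"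
    unfolding a_def by (simp only: power_mult[symmetric] mult.commute)
  hence "(\<Sum>x\<in>coprime_part (p * (p ^ e * m)). x ^ 6) = a ^ Suc e * shell_sum6 m"
    using coprime_part_prime_power[OF assms, of "Suc e"] sum_power_mult_image[of "cnj \<pi> ^ Suc e"] pi_nonzero
    by (simp add: shell_sum6_def mult.assoc)
  hence "shell_sum6 (p ^ Suc e * m) = a ^ Suc e * shell_sum6 m + b * shell_sum6 (p ^ e * m)"
    using shell_sum6_mult_p[of "p ^ e * m"] by (simp add: b_def mult.assoc)
  hence "(a - b) * shell_sum6 (p ^ Suc e * m)
      = (a - b) * a ^ Suc e * shell_sum6 m + b * ((a - b) * shell_sum6 (p ^ e * m))"
    by (simp add: algebra_simps)
  also have "\<dots> = (a ^ Suc (Suc e) - b ^ Suc (Suc e)) * shell_sum6 m"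
    unfolding Suc.IH[folded a_def b_def] by (simp add: algebra_simps)
  finally show ?case unfolding a_def b_def .
qed simp

lemma cnj_power_ne: "(cnj \<pi> ^ 6) ^ Suc e \<noteq> (\<pi> ^ 6) ^ Suc e"
proof
  assume eq: "(cnj \<pi> ^ 6) ^ Suc e = (\<pi> ^ 6) ^ Suc e"
  have "6 * Suc e = Suc (6 * e + 5)" by simp
  hence "(\<pi> ^ 6) ^ Suc e = \<pi> ^ Suc (6 * e + 5)" by (simp only: power_mult[symmetric])
  also have "\<dots> = \<pi> * \<pi> ^ (6 * e + 5)" by (rule power_Suc)
  finally have "(cnj \<pi> ^ 6) ^ Suc e = \<pi> * \<pi> ^ (6 * e + 5)" using eq by simp
  hence "A2_dvd \<pi> (cnj \<pi> ^ (6 * Suc e))"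
    unfolding A2_dvd_def power_mult using A2_power[OF pi_in_A2] by blast
  thus False using A2_dvd_power[OF A2_cnj[OF pi_in_A2]] not_dvd_cnj by blast
qed

lemma shell_sum6_prime_power_nonzero:
  assumes "\<not> p dvd m" "shell_sum6 m \<noteq> 0"
  shows "shell_sum6 (p ^ e * m) \<noteq> 0"
  using shell_sum6_prime_power[OF assms(1), of e] cnj_power_ne[of e] assms(2) by auto

lemma shell_prime_power_nonempty:
  assumes "\<not> p dvd m" "shell (p ^ e * m) \<noteq> {}"
  shows "shell m \<noteq> {}"
  using assms(2)
proof (induction e)
  case (Suc e)
  thus ?case
    using shell_mult_p_split(1)[of "p ^ e * m"] coprime_part_prime_power[OF assms(1), of "Suc e"]
    by (auto simp: mult.assoc)
qed simp

end

lemma (in split_prime) exists_prime_element: "\<exists>\<pi>. prime_element \<pi> (nat p)"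
proof -
  obtain \<pi> where \<pi>: "in_ker \<pi>" "\<pi> \<noteq> 0" "\<forall>z\<in>A2. A2_dvd \<pi> z \<longleftrightarrow> in_ker z"
    using ker_principal by blast
  have "prime_element \<pi> (nat p)"
  proof
    show "\<pi> \<in> A2" using in_ker_A2 \<pi>(1) .
    show "(cmod \<pi>)\<^sup>2 = real (nat p)" using ker_generator_norm[OF \<pi>(1,3)] p_gt_1 by simp
    show "prime (nat p)" using prime prime_int_nat_transfer by blast
    show "A2_dvd \<pi> x \<or> A2_dvd \<pi> y" if "x \<in> A2" "y \<in> A2" "A2_dvd \<pi> (x * y)" for x y
      using that \<pi>(3) in_ker_mult A2_mult by metis
    show "\<not> A2_dvd \<pi> (cnj \<pi>)"
      using \<pi>(3) A2_cnj[OF \<open>\<pi> \<in> A2\<close>] cnj_not_in_ker[OF \<pi>(1) ker_generator_norm[OF \<pi>(1,3)]] by blast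
  qed
  thus ?thesis by blast
qed

lemma shell_reduction_3:
  assumes "3 dvd n" "n > 0" "shell n \<noteq> {}"
  obtains j where "0 < j" "j < n" "shell j \<noteq> {}" "shell_sum6 j \<noteq> 0 \<Longrightarrow> shell_sum6 n \<noteq> 0"
proof -
  obtain j where n: "n = 3 * j" using assms(1) by blast
  have "eis 1 1 \<noteq> 0" using cmod_squared_eis[of 1 1] by auto
  thus ?thesis using that[of j] assms n shell_3_nonempty[of j] shell_sum6_3[of j] by simp
qed

lemma shell_reduction_inert:
  assumes "prime q" "n > 0" "shell n \<noteq> {}" "\<forall>x\<in>shell n. A2_dvd (of_nat q) x"
  obtains j where "0 < j" "j < n" "shell j \<noteq> {}" "shell_sum6 j \<noteq> 0 \<Longrightarrow> shell_sum6 n \<noteq> 0"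
proof -
  obtain j where n: "n = q\<^sup>2 * j"
    using assms(3,4) A2_dvd_of_nat_shell by blast
  have "1 < q\<^sup>2" using prime_gt_1_nat[OF assms(1)] one_less_power[of q 2] by simp
  thus ?thesis
    using that[of j] assms n shell_sum6_of_nat_dvd[OF prime_gt_0_nat[OF assms(1)], of j] by simp
qed

lemma shell_reduction_split:
  assumes "prime q" "q \<noteq> 3" "q dvd n" "n > 0" "x \<in> shell n" "\<not> A2_dvd (of_nat q) x"
  obtains j where "0 < j" "j < n" "shell j \<noteq> {}" "shell_sum6 j \<noteq> 0 \<Longrightarrow> shell_sum6 n \<noteq> 0"
proof -
  obtain a b where ab: "x = eis a b" using assms(5) by (auto simp: in_shell in_A2)
  have "int q dvd a\<^sup>2 + a*b + b\<^sup>2" using assms(3,5) ab by (simp add: eis_in_shell_iff)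
  moreover have "\<not> (int q dvd a \<and> int q dvd b)"
    using A2_dvd_of_int_eis_iff[of "int q" a b] assms(6) ab by simp
  ultimately obtain r where "int q dvd r\<^sup>2 - r + 1"
    using prime_dvd_norm_form_imp_root assms(1) by (metis prime_nat_int_transfer)
  then interpret split_prime "int q" r using assms(1,2) by unfold_locales simp_all
  obtain \<pi> where "prime_element \<pi> q" using exists_prime_element by auto
  then interpret prime_element \<pi> q .
  have "n \<noteq> 0" "\<not> is_unit q" using assms(1,4) by (auto simp: not_prime_unit)
  then obtain m where m: "n = q ^ multiplicity q n * m" "\<not> q dvd m"
    by (rule multiplicity_decompose')
  have "multiplicity q n \<noteq> 0" using m assms(3) by (metis mult_1 power_0)
  hence "1 < q ^ multiplicity q n"
    using one_less_power[of q "multiplicity q n"] prime_gt_1_nat[OF assms(1)] by simp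
  moreover have "0 < m" using m(1) assms(4) by (metis gr0I mult_0_right)
  ultimately have "m < n" using m(1) by (metis mult_1 mult_less_mono1)
  thus ?thesis
    using that[of m] m assms(4,5) shell_prime_power_nonempty[OF m(2)] shell_sum6_prime_power_nonzero[OF m(2)]
    by (metis empty_iff gr0I mult_0_right)
qed

lemma shell_reduction:
  assumes "n > 1" "shell n \<noteq> {}"
  obtains j where "0 < j" "j < n" "shell j \<noteq> {}" "shell_sum6 j \<noteq> 0 \<Longrightarrow> shell_sum6 n \<noteq> 0"
proof -
  have n_pos: "n > 0" using assms(1) by simp
  obtain q where q: "prime q" "q dvd n" using assms(1) prime_factor_nat by (metis less_irrefl)
  consider "q = 3" | "\<forall>x\<in>shell n. A2_dvd (of_nat q) x" | x where "q \<noteq> 3" "x \<in> shell n" "\<not> A2_dvd (of_nat q) x"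
    by blast
  thus ?thesis
  proof cases
    case 1
    thus ?thesis using shell_reduction_3[OF _ n_pos assms(2) that] q(2) by simp
  next
    case 2
    show ?thesis by (rule shell_reduction_inert[OF q(1) n_pos assms(2) 2 that])
  next
    case 3
    show ?thesis by (rule shell_reduction_split[OF q(1) 3(1) q(2) n_pos 3(2,3) that])
  qed
qed

theorem shell_sum6_nonzero:
  assumes "n > 0" "shell n \<noteq> {}"
  shows "shell_sum6 n \<noteq> 0"
  using assms
proof (induction n rule: less_induct)
  case (less n)
  show ?case
  proof (cases "n = 1")
    case True
    have "card (shell 1) \<noteq> 0" using less.prems finite_shell[of 1] True by simp
    thus ?thesis unfolding True shell_sum6_1 by simp
  next
    case False
    then obtain j where "0 < j" "j < n" "shell j \<noteq> {}" "shell_sum6 j \<noteq> 0 \<Longrightarrow> shell_sum6 n \<noteq> 0"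
      using shell_reduction less.prems by (metis less_one linorder_neqE_nat)
    thus ?thesis using less.IH by blast
  qed
qed

theorem theorem1p2:
  fixes m :: real
  assumes "m > 0" and "A2_shell m \<noteq> {}"
  shows "\<not> circle_design_r (sqrt m) 6 (A2_shell m)"
proof
  assume design: "circle_design_r (sqrt m) 6 (A2_shell m)"
  obtain x where "x \<in> A2_shell m" using assms(2) by blast
  then obtain n where "m = real n" using A2_cmod_squared_nat by (auto simp: A2_shell_def)
  hence n: "A2_shell m = shell n" "n > 0" using assms(1) by (simp_all add: shell_def)
  define c where "c = inverse (complex_of_real (sqrt m))"
  have c: "c \<noteq> 0" "(\<lambda>x. x / complex_of_real (sqrt m)) = (\<lambda>x. c * x)"
    using assms(1) by (auto simp: c_def field_simps)
  have "circle_design 6 ((\<lambda>x. c * x) ` shell n)"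
    using design unfolding circle_design_r_def n c(2) by blast
  hence "(\<Sum>x\<in>(\<lambda>x. c * x) ` shell n. x ^ 6) = 0" by (rule circle_design_power_sum) simp_all
  hence "c ^ 6 * shell_sum6 n = 0" by (simp add: sum_power_mult_image[OF c(1)] shell_sum6_def)
  thus False using shell_sum6_nonzero[OF n(2)] assms(2) c(1) n(1) by simp
qed

end
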